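(* In the linear setting of the context with $\theta>0$ and $\lambda=(1-\sigma)\kappa$, for all $t\ge0$, $$\frac{d}{dt}V(x(t))\le(\sigma-1)\kappa V(x(t))+\frac{1}{\theta}\Big(V(x(0))e^{(\sigma-1)\kappa t}-V(x(t))\Big).$$
   Context: Consider $\dot x=Ax+Bu$, $x\in\mathbb{R}^n$, $u\in\mathbb{R}^m$, and a gain $K$ such that $A+BK$ is Hurwitz; let $P,Q$ be symmetric positive definite with $(A+BK)^\top P+P(A+BK)=-Q$, $V(x)=x^\top Px$, and $\kappa>0$ with $Q\ge\kappa P$. The input is $u(t)=Kx(t_i)$ for $t\in[t_i,t_{i+1})$, with $e(t)=x(t_i)-x(t)$, so $\dot x=Ax+BK(x+e)$. $g(t^-)$ is the left limit. Dynamic event generator with parameters $\sigma\in(0,1)$, $\lambda>0$, $\theta\ge0$: $\dot\eta=-\lambda\eta+\sigma x^\top Qx-2x^\top PBKe$, $\eta(0)=0$; $t_0=0$, $t_{i+1}=\inf\{t>t_i:\ \eta(t)+\theta(\sigma x(t)^\top Qx(t)-2x(t)^\top PBKe(t^-))\le0\}$. Assume $x(t_i)\ne0$ for all $i$. *)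

theory Defs
  imports "HOL-Analysis.Analysis"
begin

definition sym_mat :: "real^'n^'n \<Rightarrow> bool" where
  "sym_mat M \<longleftrightarrow> transpose M = M"

definition pos_def_mat :: "real^'n^'n \<Rightarrow> bool" where
  "pos_def_mat M \<longleftrightarrow> sym_mat M \<and> (\<forall>v. v \<noteq> 0 \<longrightarrow> v \<bullet> (M *v v) > 0)"

definition hurwitz :: "real^'n^'n \<Rightarrow> bool" where
  "hurwitz M \<longleftrightarrow> (\<forall>(l::complex) (v::complex^'n).
      v \<noteq> 0 \<and> (\<chi> i j. complex_of_real (M $ i $ j)) *v v = l *s v \<longrightarrow> Re l < 0)"

definition qf :: "real^'n \<Rightarrow> real^'n^'n \<Rightarrow> real^'n \<Rightarrow> real" where
  "qf x M y = x \<bullet> (M *v y)"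

end

theory Submission
  imports Defs
begin

text \<open>Along a flow of the event-triggered loop, the Lyapunov identity turns the derivative of
  \<open>V = x\<^sup>T P x\<close> into \<open>-x\<^sup>T Q x + 2 x\<^sup>T PBK e\<close>. Since \<open>\<eta> + V\<close> satisfies
  \<open>(\<eta> + V)' \<le> -\<lambda> (\<eta> + V)\<close> when \<open>\<lambda> = (1 - \<sigma>)\<kappa>\<close>, the comparison principle for right
  derivatives gives \<open>\<eta>(t) \<le> V(0) e\<^sup>-\<^sup>\<lambda>\<^sup>t - V(t)\<close>. Between two events the trigger function
  \<open>\<eta> + \<theta>(\<sigma> x\<^sup>T Q x - 2 x\<^sup>T PBK e)\<close> stays nonnegative by continuity and the definition of
  the next event time as an infimum; this bounds \<open>2 x\<^sup>T PBK e\<close> by \<open>\<sigma> x\<^sup>T Q x + \<eta>/\<theta>\<close>, and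
  combining the two estimates with \<open>Q \<ge> \<kappa> P\<close> yields the claim.\<close>

lemma right_deriv_less_imp_growth_bound:
  fixes f f' :: "real \<Rightarrow> real"
  assumes "a \<le> b" and cont: "continuous_on {a..b} f"
    and der: "\<And>s. a \<le> s \<Longrightarrow> s < b \<Longrightarrow> (f has_real_derivative f' s) (at s within {s..})"
    and less: "\<And>s. a \<le> s \<Longrightarrow> s < b \<Longrightarrow> f' s < e"
  shows "f b \<le> f a + e * (b - a)"
proof -
  define S where "S = {s \<in> {a..b}. f s \<le> f a + e * (s - a)}"
  have "closed S" unfolding S_def
    by (rule continuous_on_closed_Collect_le[OF cont]) (auto intro!: continuous_intros)
  moreover have "a \<in> S" using \<open>a \<le> b\<close> by (simp add: S_def)
  moreover have bdd: "bdd_above S" unfolding S_def by (rule bdd_aboveI[of _ b]) auto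
  ultimately have cS: "Sup S \<in> S" using closed_contains_Sup by blast
  define c where "c = Sup S"
  have "c = b"
  proof (rule ccontr)
    assume "c \<noteq> b"
    with cS have c: "a \<le> c" "c < b" by (auto simp: S_def c_def)
    have "((\<lambda>y. (f y - f c) / (y - c)) \<longlongrightarrow> f' c) (at c within {c..})"
      using der[OF c] by (simp add: has_field_derivative_iff)
    from order_tendstoD(2)[OF this less[OF c]]
    obtain d where "d > 0"
      and d: "\<And>y. y \<in> {c..} \<Longrightarrow> y \<noteq> c \<Longrightarrow> dist y c < d \<Longrightarrow> (f y - f c) / (y - c) < e"
      unfolding eventually_at by blast
    define y where "y = c + min d (b - c) / 2"
    have y: "c < y" "y < b" "dist y c < d"
      using \<open>d > 0\<close> c by (auto simp: y_def dist_real_def min_def field_simps)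
    with d have "f y - f c < e * (y - c)" by (simp add: divide_less_eq)
    with cS c y have "y \<in> S" by (auto simp: S_def c_def algebra_simps)
    then have "y \<le> c" unfolding c_def using bdd by (rule cSup_upper)
    with y show False by simp
  qed
  with cS show ?thesis by (simp add: S_def c_def)
qed

lemma right_deriv_nonpos_imp_nonincreasing:
  fixes f f' :: "real \<Rightarrow> real"
  assumes "a \<le> b" and "continuous_on {a..b} f"
    and "\<And>s. a \<le> s \<Longrightarrow> s < b \<Longrightarrow> (f has_real_derivative f' s) (at s within {s..})"
    and nonpos: "\<And>s. a \<le> s \<Longrightarrow> s < b \<Longrightarrow> f' s \<le> 0"
  shows "f b \<le> f a"
proof (rule field_le_epsilon)
  fix e :: real assume "0 < e"
  let ?e = "e / (b - a + 1)"
  have "0 < ?e" using \<open>0 < e\<close> \<open>a \<le> b\<close> by simp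
  with nonpos have "\<And>s. a \<le> s \<Longrightarrow> s < b \<Longrightarrow> f' s < ?e" by (meson le_less_trans)
  from right_deriv_less_imp_growth_bound[OF assms(1-3) this]
  have "f b \<le> f a + ?e * (b - a)" .
  also have "?e * (b - a) \<le> e" using \<open>0 < e\<close> \<open>a \<le> b\<close> by (simp add: field_simps)
  finally show "f b \<le> f a + e" by simp
qed

lemma right_deriv_exponential_decay:
  fixes W W' :: "real \<Rightarrow> real"
  assumes "0 \<le> t" and cont: "continuous_on {0..t} W"
    and der: "\<And>s. 0 \<le> s \<Longrightarrow> s < t \<Longrightarrow> (W has_real_derivative W' s) (at s within {s..})"
    and decay: "\<And>s. 0 \<le> s \<Longrightarrow> s < t \<Longrightarrow> W' s \<le> - c * W s"
  shows "W t \<le> W 0 * exp (- c * t)"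
proof -
  define g where "g s = exp (c * s) * W s" for s
  have "g t \<le> g 0"
  proof (rule right_deriv_nonpos_imp_nonincreasing[OF \<open>0 \<le> t\<close>])
    show "continuous_on {0..t} g" unfolding g_def by (intro continuous_intros cont)
  next
    fix s assume s: "0 \<le> s" "s < t"
    show "(g has_real_derivative exp (c * s) * (c * W s + W' s)) (at s within {s..})"
      unfolding g_def by (auto intro!: derivative_eq_intros der[OF s] simp: algebra_simps)
    show "exp (c * s) * (c * W s + W' s) \<le> 0"
      using decay[OF s] by (simp add: mult_nonneg_nonpos)
  qed
  then have "exp (c * t) * W t \<le> W 0" by (simp add: g_def)
  then show ?thesis by (simp add: exp_minus field_simps)
qed

lemma nonneg_before_first_nonpos_after:
  fixes h :: "real \<Rightarrow> real" and a b :: ereal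
  assumes cont: "continuous (at_right t) h"
    and t: "a \<le> ereal t" "ereal t < b"
    and b: "b = Inf (ereal ` {s. a < ereal s \<and> h s \<le> 0})"
  shows "0 \<le> h t"
proof (rule ccontr)
  assume "\<not> 0 \<le> h t"
  with cont have "eventually (\<lambda>s. h s < 0) (at_right t)"
    by (auto simp: continuous_within intro: order_tendstoD)
  then obtain c where "c > t" and c: "\<And>s. t < s \<Longrightarrow> s < c \<Longrightarrow> h s < 0"
    unfolding eventually_at_right_field by blast
  obtain z where z: "ereal t < ereal z" "ereal z < b" using ereal_dense2[OF t(2)] by blast
  define s where "s = (t + min z c) / 2"
  have s: "t < s" "s < z" "s < c" using z \<open>c > t\<close> by (auto simp: s_def)
  with c t(1) have "s \<in> {s. a < ereal s \<and> h s \<le> 0}"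
    by (auto intro: le_less_trans simp: less_imp_le)
  then have "b \<le> ereal s" unfolding b by (intro Inf_lower) auto
  with z(2) have "ereal z < ereal s" by (rule less_le_trans)
  with s show False by simp
qed

lemma inner_matrix_vector_sym:
  fixes M :: "real^'n^'n"
  assumes "transpose M = M"
  shows "u \<bullet> (M *v v) = v \<bullet> (M *v u)"
  by (metis assms dot_lmul_matrix inner_commute transpose_matrix_vector)

lemma lyapunov_quadratic_form:
  fixes M P Q :: "real^'n^'n"
  assumes lyap: "transpose M ** P + P ** M = - Q" and "transpose P = P"
  shows "2 * qf v P (M *v v) = - qf v Q v"
proof -
  have "(- Q) *v v = - (Q *v v)"
    by (simp add: matrix_vector_mult_def vec_eq_iff sum_negf)
  then have "- qf v Q v = v \<bullet> ((transpose M ** P + P ** M) *v v)"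
    by (simp add: lyap qf_def)
  also have "\<dots> = v \<bullet> ((transpose M ** P) *v v) + v \<bullet> (P *v (M *v v))"
    by (simp add: matrix_vector_mult_add_rdistrib inner_add_right matrix_vector_mul_assoc)
  also have "v \<bullet> ((transpose M ** P) *v v) = (M *v v) \<bullet> (P *v v)"
    by (metis dot_lmul_matrix matrix_vector_mul_assoc vector_transpose_matrix)
  also have "(M *v v) \<bullet> (P *v v) = v \<bullet> (P *v (M *v v))"
    by (rule inner_matrix_vector_sym[OF \<open>transpose P = P\<close>, symmetric])
  also have "\<dots> + v \<bullet> (P *v (M *v v)) = 2 * qf v P (M *v v)"
    by (simp add: qf_def)
  finally show ?thesis by simp
qed

lemma has_real_derivative_lyapunov_sampled:
  fixes A :: "real^'n^'n" and B :: "real^'m^'n" and K :: "real^'n^'m"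
    and P Q :: "real^'n^'n" and x :: "real \<Rightarrow> real^'n"
  assumes "transpose P = P"
    and lyap: "transpose (A + B ** K) ** P + P ** (A + B ** K) = - Q"
    and xd: "(x has_vector_derivative (A *v x s + B *v (K *v w))) (at s within S)"
  shows "((\<lambda>s. qf (x s) P (x s)) has_real_derivative
          - qf (x s) Q (x s) + 2 * qf (x s) (P ** B ** K) (w - x s)) (at s within S)"
proof -
  let ?d = "A *v x s + B *v (K *v w)"
  have "((\<lambda>s. P *v x s) has_vector_derivative P *v ?d) (at s within S)"
    using bounded_linear.has_vector_derivative[OF matrix_vector_mul_bounded_linear xd] .
  from bounded_bilinear.has_vector_derivative[OF bounded_bilinear_inner xd this]
  have D: "((\<lambda>s. qf (x s) P (x s)) has_real_derivative
      x s \<bullet> (P *v ?d) + ?d \<bullet> (P *v x s)) (at s within S)"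
    by (simp add: has_real_derivative_iff_has_vector_derivative qf_def)
  have "?d = (A + B ** K) *v x s + (B ** K) *v (w - x s)"
    by (simp add: matrix_vector_mult_add_rdistrib matrix_vector_right_distrib
        matrix_vector_mult_diff_distrib matrix_vector_mul_assoc[symmetric])
  then have "x s \<bullet> (P *v ?d) + ?d \<bullet> (P *v x s)
      = 2 * qf (x s) P ((A + B ** K) *v x s) + 2 * qf (x s) (P ** B ** K) (w - x s)"
    using inner_matrix_vector_sym[OF \<open>transpose P = P\<close>, of "x s" ?d]
    by (simp add: qf_def matrix_vector_right_distrib inner_add_right
        matrix_vector_mul_assoc[symmetric])
  with D lyapunov_quadratic_form[OF lyap \<open>transpose P = P\<close>] show ?thesis by simp
qed

lemma continuous_on_qf:
  fixes M :: "real^'n^'n"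
  assumes "continuous_on S f" and "continuous_on S g"
  shows "continuous_on S (\<lambda>s. qf (f s) M (g s))"
  unfolding qf_def
  by (intro continuous_intros assms bounded_linear.continuous_on[OF matrix_vector_mul_bounded_linear])

lemma triggered_decrease_estimate:
  fixes a b v \<eta> r \<theta> \<sigma> \<kappa> :: real
  assumes "\<theta> > 0" and "\<sigma> \<le> 1" and "\<kappa> * v \<le> a"
    and trigger: "0 \<le> \<eta> + \<theta> * (\<sigma> * a - 2 * b)" and "\<eta> \<le> r - v"
  shows "- a + 2 * b \<le> (\<sigma> - 1) * \<kappa> * v + (1 / \<theta>) * (r - v)"
proof -
  have "2 * b \<le> \<sigma> * a + \<eta> / \<theta>"
    using trigger \<open>\<theta> > 0\<close> by (simp add: field_simps)
  then have "- a + 2 * b \<le> - ((1 - \<sigma>) * a) + \<eta> / \<theta>" by (simp add: algebra_simps)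
  also have "- ((1 - \<sigma>) * a) \<le> - ((1 - \<sigma>) * (\<kappa> * v))"
    using assms by (simp add: mult_left_mono)
  also have "\<eta> / \<theta> \<le> (r - v) / \<theta>"
    using assms by (simp add: divide_right_mono)
  finally show ?thesis by (simp add: algebra_simps)
qed

lemma lyapunov_plus_eta_decay:
  fixes A :: "real^'n^'n" and B :: "real^'m^'n" and K :: "real^'n^'m"
    and P Q :: "real^'n^'n" and x :: "real \<Rightarrow> real^'n" and \<eta> :: "real \<Rightarrow> real"
    and tt :: "nat \<Rightarrow> ereal"
  assumes "transpose P = P"
    and lyap: "transpose (A + B ** K) ** P + P ** (A + B ** K) = - Q"
    and Q_ge: "\<forall>v. qf v Q v \<ge> \<kappa> * qf v P v" and "\<sigma> \<le> 1"
    and lambda_def: "lam = (1 - \<sigma>) * \<kappa>"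
    and cover: "\<forall>t\<ge>0. \<exists>i. tt i \<le> ereal t \<and> ereal t < tt (Suc i)"
    and x_cont: "continuous_on {0..} x"
    and x_ode: "\<forall>i t. tt i \<le> ereal t \<and> ereal t < tt (Suc i) \<longrightarrow>
          (x has_vector_derivative
             (A *v x t + B *v (K *v x (real_of_ereal (tt i))))) (at t within {t..})"
    and eta_cont: "continuous_on {0..} \<eta>"
    and eta_ode: "\<forall>i t. tt i \<le> ereal t \<and> ereal t < tt (Suc i) \<longrightarrow>
          (\<eta> has_real_derivative
             (- lam * \<eta> t + \<sigma> * qf (x t) Q (x t)
              - 2 * qf (x t) (P ** B ** K) (x (real_of_ereal (tt i)) - x t))) (at t within {t..})"
    and "0 \<le> t"
  shows "qf (x t) P (x t) + \<eta> t \<le> (qf (x 0) P (x 0) + \<eta> 0) * exp (- lam * t)"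
proof (rule right_deriv_exponential_decay[OF \<open>0 \<le> t\<close>])
  show "continuous_on {0..t} (\<lambda>s. qf (x s) P (x s) + \<eta> s)"
    by (intro continuous_intros continuous_on_qf continuous_on_subset[OF x_cont]
        continuous_on_subset[OF eta_cont]) auto
next
  fix s assume "0 \<le> s" "s < t"
  then obtain i where i: "tt i \<le> ereal s \<and> ereal s < tt (Suc i)" using cover by force
  from has_real_derivative_lyapunov_sampled[OF \<open>transpose P = P\<close> lyap] x_ode i
  have "((\<lambda>s. qf (x s) P (x s)) has_real_derivative - qf (x s) Q (x s)
      + 2 * qf (x s) (P ** B ** K) (x (real_of_ereal (tt i)) - x s)) (at s within {s..})"
    by blast
  from DERIV_add[OF this eta_ode[rule_format, OF i]]
  show "((\<lambda>s. qf (x s) P (x s) + \<eta> s) has_real_derivative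
      - (1 - \<sigma>) * qf (x s) Q (x s) - lam * \<eta> s) (at s within {s..})"
    by (simp add: algebra_simps)
  have "(1 - \<sigma>) * (\<kappa> * qf (x s) P (x s)) \<le> (1 - \<sigma>) * qf (x s) Q (x s)"
    using Q_ge \<open>\<sigma> \<le> 1\<close> by (intro mult_left_mono) auto
  then show "- (1 - \<sigma>) * qf (x s) Q (x s) - lam * \<eta> s \<le> - lam * (qf (x s) P (x s) + \<eta> s)"
    by (simp add: lambda_def algebra_simps)
qed

theorem mainTheorem7:
  fixes A :: "real^'n^'n" and B :: "real^'m^'n" and K :: "real^'n^'m"
    and P Q :: "real^'n^'n" and \<kappa> \<sigma> lam \<theta> :: real
    and x :: "real \<Rightarrow> real^'n" and \<eta> :: "real \<Rightarrow> real"
    and tt :: "nat \<Rightarrow> ereal"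
  assumes hurw: "hurwitz (A + B ** K)"
    and P_pd: "pos_def_mat P" and Q_pd: "pos_def_mat Q"
    and lyap: "transpose (A + B ** K) ** P + P ** (A + B ** K) = - Q"
    and kappa_pos: "\<kappa> > 0"
    and Q_ge: "\<forall>v. qf v Q v \<ge> \<kappa> * qf v P v"
    and sigma: "0 < \<sigma>" "\<sigma> < 1"
    and theta_pos: "\<theta> > 0"
    and lambda_def: "lam = (1 - \<sigma>) * \<kappa>"
    (* event times: t_0 = 0, t_{i+1} = inf {...} (inf of empty set = \<infinity>) *)
    and t0: "tt 0 = 0"
    and t_next: "\<forall>i. tt (Suc i) = Inf (ereal ` {s. tt i < ereal s \<and>
          \<eta> s + \<theta> * (\<sigma> * qf (x s) Q (x s)
             - 2 * qf (x s) (P ** B ** K) (x (real_of_ereal (tt i)) - x s)) \<le> 0})"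
    (* the closed-loop solution exists on [0,\<infinity>) (no Zeno behaviour) *)
    and cover: "\<forall>t\<ge>0. \<exists>i. tt i \<le> ereal t \<and> ereal t < tt (Suc i)"
    and x_nz: "\<forall>i. tt i \<noteq> \<infinity> \<longrightarrow> x (real_of_ereal (tt i)) \<noteq> 0"
    (* plant dynamics with sample-and-hold input u(t) = K x(t_i) *)
    and x_cont: "continuous_on {0..} x"
    and x_ode: "\<forall>i t. tt i \<le> ereal t \<and> ereal t < tt (Suc i) \<longrightarrow>
          (x has_vector_derivative
             (A *v x t + B *v (K *v x (real_of_ereal (tt i))))) (at t within {t..})"
    and eta0: "\<eta> 0 = 0"
    and eta_cont: "continuous_on {0..} \<eta>"
    and eta_ode: "\<forall>i t. tt i \<le> ereal t \<and> ereal t < tt (Suc i) \<longrightarrow>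
          (\<eta> has_real_derivative
             (- lam * \<eta> t + \<sigma> * qf (x t) Q (x t)
              - 2 * qf (x t) (P ** B ** K) (x (real_of_ereal (tt i)) - x t))) (at t within {t..})"
  shows "\<forall>t\<ge>0. \<exists>D. ((\<lambda>s. qf (x s) P (x s)) has_real_derivative D) (at t within {t..}) \<and>
           D \<le> (\<sigma> - 1) * \<kappa> * qf (x t) P (x t)
                + (1 / \<theta>) * (qf (x 0) P (x 0) * exp ((\<sigma> - 1) * \<kappa> * t) - qf (x t) P (x t))"
proof (intro allI impI)
  fix t :: real assume "0 \<le> t"
  have Psym: "transpose P = P" using P_pd by (simp add: pos_def_mat_def sym_mat_def)
  obtain i where i: "tt i \<le> ereal t" "ereal t < tt (Suc i)" using cover \<open>0 \<le> t\<close> by blast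
  let ?h = "\<lambda>s. \<eta> s + \<theta> * (\<sigma> * qf (x s) Q (x s)
      - 2 * qf (x s) (P ** B ** K) (x (real_of_ereal (tt i)) - x s))"
  have "continuous_on {0..} ?h" by (intro continuous_intros continuous_on_qf x_cont eta_cont)
  with \<open>0 \<le> t\<close> have "continuous (at_right t) ?h"
    by (auto simp: continuous_on_eq_continuous_within intro: continuous_within_subset)
  from nonneg_before_first_nonpos_after[OF this i t_next[rule_format]]
  have trigger: "0 \<le> ?h t" .
  from lyapunov_plus_eta_decay[OF Psym lyap Q_ge _ lambda_def cover x_cont x_ode eta_cont eta_ode
      \<open>0 \<le> t\<close>] sigma
  have eta_bound: "\<eta> t \<le> qf (x 0) P (x 0) * exp ((\<sigma> - 1) * \<kappa> * t) - qf (x t) P (x t)"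
    by (simp add: eta0 lambda_def algebra_simps)
  from has_real_derivative_lyapunov_sampled[OF Psym lyap] x_ode i
  have "((\<lambda>s. qf (x s) P (x s)) has_real_derivative - qf (x t) Q (x t)
      + 2 * qf (x t) (P ** B ** K) (x (real_of_ereal (tt i)) - x t)) (at t within {t..})"
    by blast
  with triggered_decrease_estimate[OF theta_pos _ _ trigger eta_bound] sigma Q_ge
  show "\<exists>D. ((\<lambda>s. qf (x s) P (x s)) has_real_derivative D) (at t within {t..}) \<and>
           D \<le> (\<sigma> - 1) * \<kappa> * qf (x t) P (x t)
                + (1 / \<theta>) * (qf (x 0) P (x 0) * exp ((\<sigma> - 1) * \<kappa> * t) - qf (x t) P (x t))"
    by auto
qed

end
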